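(* Let $q\colon L\to\mathbb Z$ be an integral quadratic form on a free abelian group $L$ of finite rank, with associated symmetric bilinear form $b$, and let $v\in L$ with $q(v)=\pm2$. Let $q'$ be the $v$-twist of $q$. Then $q$ and $q'$ have the same discriminant group (the cokernel of the correlation homomorphism $L\to L^*$). In particular, $q'$ is non-degenerate (respectively unimodular) if and only if $q$ is non-degenerate (respectively unimodular).
   Context: For $v\in L$ with $q(v)=\pm 2$, let $s_v\colon L\to L$ be the reflection $x\mapsto x-b(x,v)v$ if $q(v)=2$ and $x\mapsto x+b(x,v)v$ if $q(v)=-2$. The $v$-twist of $q$ is the integral quadratic form $q'(x)=b(x,s_vx)$; it is the unique integral quadratic form with $q'(v)=-q(v)$ and $q'(w)=q(w)$ for all $w$ orthogonal to $v$. *)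

theory Defs
  imports "HOL-Analysis.Finite_Cartesian_Product" "HOL-Algebra.Coset"
begin

text \<open>Convention (forced by s_v being a reflection): q(x) = b(x,x) for an integer
 valued symmetric biadditive (= Z-bilinear) form b.\<close>

definition biadditive :: "(int^'n \<Rightarrow> int^'n \<Rightarrow> int) \<Rightarrow> bool" where
  "biadditive b \<longleftrightarrow> (\<forall>x y z. b (x + y) z = b x z + b y z) \<and> (\<forall>x y z. b x (y + z) = b x y + b x z)"

definition integral_qf :: "(int^'n::finite \<Rightarrow> int) \<Rightarrow> bool" where
  "integral_qf q \<longleftrightarrow> (\<exists>b. biadditive b \<and> (\<forall>x y. b x y = b y x) \<and> (\<forall>x. q x = b x x))"

definition bil :: "(int^'n::finite \<Rightarrow> int) \<Rightarrow> int^'n \<Rightarrow> int^'n \<Rightarrow> int" where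
  "bil q x y = (q (x + y) - q x - q y) div 2"

definition refl_v :: "(int^'n::finite \<Rightarrow> int) \<Rightarrow> int^'n \<Rightarrow> int^'n \<Rightarrow> int^'n" where
  "refl_v q v x = (if q v = 2 then x - bil q x v *s v else x + bil q x v *s v)"

definition twist :: "(int^'n::finite \<Rightarrow> int) \<Rightarrow> int^'n \<Rightarrow> int^'n \<Rightarrow> int" where
  "twist q v x = bil q x (refl_v q v x)"

definition dual_group :: "(int^'n::finite \<Rightarrow> int) monoid" where
  "dual_group = \<lparr>carrier = {f. \<forall>x y. f (x + y) = f x + f y},
                 mult = (\<lambda>f g x. f x + g x), one = (\<lambda>x. 0)\<rparr>"

definition correlation :: "(int^'n::finite \<Rightarrow> int) \<Rightarrow> int^'n \<Rightarrow> (int^'n \<Rightarrow> int)" where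
  "correlation q x = (\<lambda>y. bil q x y)"

definition disc_group :: "(int^'n::finite \<Rightarrow> int) \<Rightarrow> (int^'n \<Rightarrow> int) set monoid" where
  "disc_group q = dual_group Mod (range (correlation q))"

definition nondegenerate :: "(int^'n::finite \<Rightarrow> int) \<Rightarrow> bool" where
  "nondegenerate q \<longleftrightarrow> inj (correlation q)"

definition unimodular :: "(int^'n::finite \<Rightarrow> int) \<Rightarrow> bool" where
  "unimodular q \<longleftrightarrow> bij_betw (correlation q) UNIV (carrier dual_group)"

end

theory Submission
  imports Defs
begin

text \<open>Writing \<open>\<epsilon> = q(v)/2 = \<plusminus>1\<close>, the reflection is \<open>s x = x - \<epsilon> b(x,v) v\<close>, an involution
  with \<open>b(s x, v) = -b(x, v)\<close>. Polarising \<open>q'(x) = b(x, s x) = q(x) - \<epsilon> b(x,v)\<^sup>2\<close> gives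
  \<open>b'(x, y) = b(s x, y)\<close>, so the correlation of \<open>q'\<close> is that of \<open>q\<close> precomposed with the
  bijection \<open>s\<close>. Hence both correlations have the same image, and one is injective
  (bijective) iff the other is.\<close>

lemma biadditive_zero_left:
  assumes "biadditive b" shows "b 0 y = 0"
proof -
  have "b (0 + 0) y = b 0 y + b 0 y" using assms unfolding biadditive_def by blast
  then show ?thesis by simp
qed

lemma biadditive_uminus_left:
  assumes "biadditive b" shows "b (- x) y = - b x y"
proof -
  have "b (x + - x) y = b x y + b (- x) y" using assms unfolding biadditive_def by blast
  then show ?thesis using biadditive_zero_left[OF assms] by simp
qed

lemma biadditive_of_nat_smult_left:
  assumes "biadditive b" shows "b (of_nat n *s x) y = of_nat n * b x y"
proof (induction n)
  case 0
  then show ?case using biadditive_zero_left[OF assms] by simp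
next
  case (Suc n)
  have "of_nat (Suc n) *s x = x + of_nat n *s x"
    by (simp add: vector_sadd_rdistrib)
  moreover have "b (x + of_nat n *s x) y = b x y + b (of_nat n *s x) y"
    using assms unfolding biadditive_def by blast
  ultimately show ?case using Suc by (simp add: algebra_simps)
qed

lemma biadditive_smult_left:
  assumes "biadditive b" shows "b (c *s x) y = c * b x y"
proof -
  have nonneg: "b (c *s x) y = c * b x y" if "c \<ge> 0" for c
    using biadditive_of_nat_smult_left[OF assms, of "nat c"] that by simp
  show ?thesis
  proof (cases "c \<ge> 0")
    case False
    have "b (c *s x) y = b (- ((- c) *s x)) y" by (simp add: vector_smult_lneg)
    also have "\<dots> = c * b x y"
      using nonneg[of "- c"] False biadditive_uminus_left[OF assms] by simp
    finally show ?thesis .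
  qed (rule nonneg)
qed

lemma bil_diagonal:
  assumes "biadditive b" and "\<And>x y. b x y = b y x"
  shows "bil (\<lambda>x. b x x) = b"
proof (intro ext)
  fix x y
  have "b (x + y) (x + y) - b x x - b y y = 2 * b x y"
    using assms unfolding biadditive_def by (simp add: algebra_simps)
  then show "bil (\<lambda>x. b x x) x y = b x y" unfolding bil_def by simp
qed

lemma integral_qf_bil:
  assumes "integral_qf q"
  shows "biadditive (bil q)" and "bil q x y = bil q y x" and "q x = bil q x x"
proof -
  obtain b where b: "biadditive b" "\<And>x y. b x y = b y x" and q: "q = (\<lambda>x. b x x)"
    using assms unfolding integral_qf_def by blast
  have "bil q = b" unfolding q using bil_diagonal[OF b] .
  then show "biadditive (bil q)" "bil q x y = bil q y x" "q x = bil q x x"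
    using b q by simp_all
qed

context
  fixes q :: "int^'n::finite \<Rightarrow> int" and v :: "int^'n"
  assumes integral: "integral_qf q" and root: "q v = 2 \<or> q v = -2"
begin

private lemma bil_commute: "bil q x y = bil q y x"
  using integral_qf_bil(2)[OF integral] .

private lemma q_eq_bil: "q x = bil q x x"
  using integral_qf_bil(3)[OF integral] .

private lemma bil_add_left: "bil q (x + y) z = bil q x z + bil q y z"
  using integral_qf_bil(1)[OF integral] unfolding biadditive_def by blast

private lemma bil_add_right: "bil q x (y + z) = bil q x y + bil q x z"
  using integral_qf_bil(1)[OF integral] unfolding biadditive_def by blast

private lemma bil_smult_left: "bil q (c *s x) y = c * bil q x y"
  using biadditive_smult_left[OF integral_qf_bil(1)[OF integral]] .

lemma refl_v_eq: "refl_v q v x = x - (q v div 2 * bil q x v) *s v"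
  using root unfolding refl_v_def by (auto simp: vec_eq_iff)

lemma bil_refl_v_left:
  "bil q (refl_v q v x) y = bil q x y - q v div 2 * bil q x v * bil q v y"
  unfolding refl_v_eq diff_conv_add_uminus bil_add_left
  by (simp add: vector_smult_lneg[symmetric] bil_smult_left)

lemma bil_refl_v_root: "bil q (refl_v q v x) v = - bil q x v"
proof -
  have "q v div 2 * bil q v v = 2"
    using root q_eq_bil[of v] by auto
  then show ?thesis unfolding bil_refl_v_left by (simp add: algebra_simps)
qed

lemma refl_v_involution: "refl_v q v (refl_v q v x) = x"
  unfolding refl_v_eq[of "refl_v q v x"] bil_refl_v_root
  by (simp add: refl_v_eq vec_eq_iff)

lemma twist_eq: "twist q v x = q x - q v div 2 * bil q x v ^ 2"
proof -
  have "twist q v x = bil q (refl_v q v x) x"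
    unfolding twist_def by (rule bil_commute)
  also have "\<dots> = bil q x x - q v div 2 * bil q x v * bil q v x"
    by (rule bil_refl_v_left)
  finally show ?thesis
    using q_eq_bil[of x] bil_commute[of v x] by (simp add: power2_eq_square)
qed

lemma bil_twist: "bil (twist q v) x y = bil q (refl_v q v x) y"
proof -
  have "twist q v (x + y) - twist q v x - twist q v y
      = 2 * (bil q x y - q v div 2 * bil q x v * bil q v y)"
    using bil_commute[of y x] bil_commute[of v y]
    by (simp add: twist_eq q_eq_bil bil_add_left bil_add_right power2_eq_square
        algebra_simps)
  then show ?thesis unfolding bil_def[of "twist q v"] bil_refl_v_left by simp
qed

lemma correlation_twist: "correlation (twist q v) = correlation q \<circ> refl_v q v"
  by (simp add: correlation_def bil_twist fun_eq_iff)

end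

lemma disc_group_correlation_comp_bij:
  assumes "correlation q' = correlation q \<circ> s" and "bij s"
  shows "disc_group q' = disc_group q"
proof -
  have "range (correlation q') = range (correlation q)"
    unfolding assms(1) image_comp[symmetric] using bij_is_surj[OF assms(2)] by simp
  then show ?thesis unfolding disc_group_def by simp
qed

lemma nondegenerate_correlation_comp_bij:
  assumes "correlation q' = correlation q \<circ> s" and "bij s"
  shows "nondegenerate q' \<longleftrightarrow> nondegenerate q"
  unfolding nondegenerate_def assms(1) using assms(2)
  by (metis bij_betw_def inj_compose inj_on_imageI)

lemma unimodular_correlation_comp_bij:
  assumes "correlation q' = correlation q \<circ> s" and "bij s"
  shows "unimodular q' \<longleftrightarrow> unimodular q"
  unfolding unimodular_def assms(1) using assms(2)
  by (metis bij_betw_comp_iff)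

theorem lemma2p6:
  fixes q :: "int^'n::finite \<Rightarrow> int" and v :: "int^'n"
  assumes "integral_qf q"
    and "q v = 2 \<or> q v = -2"
  shows "disc_group (twist q v) \<cong> disc_group q
    \<and> (nondegenerate (twist q v) \<longleftrightarrow> nondegenerate q)
    \<and> (unimodular (twist q v) \<longleftrightarrow> unimodular q)"
proof -
  have bij: "bij (refl_v q v)"
    using refl_v_involution[OF assms] by (metis bij_iff)
  note correlation = correlation_twist[OF assms]
  show ?thesis
    using disc_group_correlation_comp_bij[OF correlation bij]
      nondegenerate_correlation_comp_bij[OF correlation bij]
      unimodular_correlation_comp_bij[OF correlation bij] by simp
qed

end
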